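(* Let $F$ be a periodic fabric of order greater than $4$ whose side-preserving symmetry group $H_1$ is generated by side-preserving glide-reflections and is transitive on the set of all strands, and suppose $F$ is perfectly coloured by thin striping. Let $P$ be the resulting pattern, regarded as the design of a prefabric. Let $\gamma$ be a side-preserving glide-reflection symmetry of $F$ whose axis runs diagonally (at $45^\circ$ to the strands) through cell centres and whose glide is $k\delta$ for an integer $k$, where $\delta=\sqrt2$ is the length of a cell diagonal. (i) If $k$ is even and the axis passes through irredundant cells, or $k$ is odd and the axis passes through redundant cells, then the prefabric with design $P$ has a side-preserving glide-reflection with the same axis and glide. (ii) If $k$ is even and the axis passes through redundant cells, or $k$ is odd and the axis passes through irredundant cells, then the prefabric with design $P$ has a side-reversing glide-reflection with the same axis and glide.
   Context: The plane is divided into unit square cells by a square grid. A prefabric consists of vertical strands (warps, columns of cells) and horizontal strands (wefts, rows of cells), with a specification in every cell of which strand is uppermost when viewed from the obverse. Its design colours a cell dark if the warp is uppermost and pale if the weft is uppermost; any dark/pale colouring of the cells, regarded as a design, determines a prefabric. A prefabric is periodic if invariant under two linearly independent translations; its order is the period of the up/down sequence along a strand. A symmetry is an isometry of the plane preserving the grid and the prefabric, possibly composed with side reversal $\tau$ (reflection in the plane of the prefabric, interchanging which strand is uppermost in every cell); symmetries without $\tau$ are side-preserving, those with $\tau$ side-reversing. $G_1$ is the symmetry group and $H_1$ its side-preserving subgroup. A fabric is a prefabric that does not fall apart, where a prefabric falls apart if some nonempty proper subset $S$ of the strands is uppermost at every crossing of a strand of $S$ with a strand outside $S$. Thin striping colours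 warps alternately dark and pale and wefts alternately dark and pale; the pattern colours each cell with the colour of the strand uppermost there. A cell is redundant if the warp and weft crossing there have the same colour and irredundant otherwise; these form a checkerboard, and a diagonal line through cell centres passes only through cells of one class. The colouring is perfect if every symmetry in $G_1$ maps all dark strands to dark strands and all pale strands to pale strands, or interchanges the two colour classes of strands. *)

theory Defs
  imports Complex_Main
begin

text \<open>Cell (i,j) (column i, row j) is the
unit square centred at the lattice point i + j*ii; the grid consists of the lines
Re z = n + 1/2 and Im z = n + 1/2 (n integer). A design (prefabric) is
D :: int * int => bool, with D (i,j) = True meaning the cell is dark, i.e. the warp
(column i) is uppermost; False means pale (weft, row j, uppermost).\<close>

type_synonym design = "int \<times> int \<Rightarrow> bool"

datatype strand = Warp int | Weft int

definition centre :: "int \<times> int \<Rightarrow> complex" where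
  "centre c = Complex (of_int (fst c)) (of_int (snd c))"

definition grid :: "complex set" where
  "grid = {z. \<exists>n::int. Re z = of_int n + 1/2 \<or> Im z = of_int n + 1/2}"

definition plane_isometry :: "(complex \<Rightarrow> complex) \<Rightarrow> bool" where
  "plane_isometry f \<longleftrightarrow> (\<forall>z w. dist (f z) (f w) = dist z w)"

text \<open>Does the isometry carry vertical strands to horizontal ones?\<close>
definition swaps :: "(complex \<Rightarrow> complex) \<Rightarrow> bool" where
  "swaps f \<longleftrightarrow> Re (f \<i> - f 0) \<noteq> 0"

text \<open>(f, s) is a symmetry of the prefabric with design D: f is a grid-preserving
isometry, s = True means f is composed with the side reversal tau.  The image of the
warp (resp. weft) through a cell is a weft (resp. warp) exactly when f swaps the
directions, and tau interchanges which strand is uppermost in every cell.\<close>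
definition is_sym :: "design \<Rightarrow> (complex \<Rightarrow> complex) \<Rightarrow> bool \<Rightarrow> bool" where
  "is_sym D f s \<longleftrightarrow> plane_isometry f \<and> f ` grid = grid \<and>
     (\<forall>c c'. f (centre c) = centre c' \<longrightarrow> D c' = (D c \<noteq> (swaps f \<noteq> s)))"

definition G1 :: "design \<Rightarrow> ((complex \<Rightarrow> complex) \<times> bool) set" where
  "G1 D = {(f, s). is_sym D f s}"

definition H1 :: "design \<Rightarrow> (complex \<Rightarrow> complex) set" where
  "H1 D = {f. is_sym D f False}"

text \<open>Reflection in the line through p with unit direction u, followed by the
translation by s*u parallel to that line (the glide, signed along u).\<close>
definition glide_map :: "complex \<Rightarrow> complex \<Rightarrow> real \<Rightarrow> complex \<Rightarrow> complex" where
  "glide_map p u s = (\<lambda>z. p + u\<^sup>2 * cnj (z - p) + of_real s * u)"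

definition glide_reflection :: "(complex \<Rightarrow> complex) \<Rightarrow> bool" where
  "glide_reflection f \<longleftrightarrow> (\<exists>p u s. cmod u = 1 \<and> s \<noteq> 0 \<and> f = glide_map p u s)"

inductive_set generated :: "(complex \<Rightarrow> complex) set \<Rightarrow> (complex \<Rightarrow> complex) set"
  for S where
  gen_id: "id \<in> generated S"
| gen_base: "f \<in> S \<Longrightarrow> f \<in> generated S"
| gen_comp: "f \<in> generated S \<Longrightarrow> g \<in> generated S \<Longrightarrow> f \<circ> g \<in> generated S"
| gen_inv: "f \<in> generated S \<Longrightarrow> inv f \<in> generated S"

text \<open>Strands as their centre lines.\<close>
fun strand_line :: "strand \<Rightarrow> complex set" where
  "strand_line (Warp i) = {z. Re z = of_int i}"
| "strand_line (Weft j) = {z. Im z = of_int j}"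

definition falls_apart :: "design \<Rightarrow> bool" where
  "falls_apart D \<longleftrightarrow> (\<exists>S::strand set. S \<noteq> {} \<and> S \<noteq> UNIV \<and>
     (\<forall>i j. (Warp i \<in> S \<and> Weft j \<notin> S \<longrightarrow> D (i, j)) \<and>
            (Weft j \<in> S \<and> Warp i \<notin> S \<longrightarrow> \<not> D (i, j))))"

definition is_fabric :: "design \<Rightarrow> bool" where
  "is_fabric D \<longleftrightarrow> \<not> falls_apart D"

definition periodic :: "design \<Rightarrow> bool" where
  "periodic D \<longleftrightarrow> (\<exists>v w. Im (cnj v * w) \<noteq> 0 \<and>
      is_sym D (\<lambda>z. z + v) False \<and> is_sym D (\<lambda>z. z + w) False)"

fun strand_has_period :: "design \<Rightarrow> strand \<Rightarrow> nat \<Rightarrow> bool" where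
  "strand_has_period D (Warp i) p = (\<forall>j. D (i, j + int p) = D (i, j))"
| "strand_has_period D (Weft j) p = (\<forall>i. D (i + int p, j) = D (i, j))"

definition order :: "design \<Rightarrow> nat" where
  "order D = (LEAST p. 0 < p \<and> (\<forall>\<sigma>. strand_has_period D \<sigma> p))"

text \<open>Thin striping with phases a, b: warp i is dark iff (even i = a), weft j is dark
iff (even j = b).\<close>
fun dark_strand :: "bool \<Rightarrow> bool \<Rightarrow> strand \<Rightarrow> bool" where
  "dark_strand a b (Warp i) = (even i = a)"
| "dark_strand a b (Weft j) = (even j = b)"

definition pattern :: "bool \<Rightarrow> bool \<Rightarrow> design \<Rightarrow> design" where
  "pattern a b D = (\<lambda>(i, j). if D (i, j) then dark_strand a b (Warp i)
                                         else dark_strand a b (Weft j))"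

definition redundant :: "bool \<Rightarrow> bool \<Rightarrow> int \<times> int \<Rightarrow> bool" where
  "redundant a b c \<longleftrightarrow> dark_strand a b (Warp (fst c)) = dark_strand a b (Weft (snd c))"

definition perfect :: "bool \<Rightarrow> bool \<Rightarrow> design \<Rightarrow> bool" where
  "perfect a b D \<longleftrightarrow> (\<forall>(f, s) \<in> G1 D.
     (\<forall>\<sigma> \<rho>. f ` strand_line \<sigma> = strand_line \<rho> \<longrightarrow> dark_strand a b \<rho> = dark_strand a b \<sigma>) \<or>
     (\<forall>\<sigma> \<rho>. f ` strand_line \<sigma> = strand_line \<rho> \<longrightarrow> dark_strand a b \<rho> \<noteq> dark_strand a b \<sigma>))"

end

theory Submission
  imports Defs
begin

text \<open>A diagonal glide-reflection exchanges warps and wefts, so a side-preserving one turns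
every dark cell into a pale cell and vice versa: the warp uppermost at a cell becomes the weft
uppermost at the image cell. Under thin striping the colour of a strand is its parity, and a
diagonal glide through cell centres carries column x to a row whose parity is that of
x + (sum of the coordinates of a cell on the axis) + k. Hence the pattern colour at the image
cell agrees or disagrees with the original one uniformly, according to whether that parity
matches the phases of the striping, which is exactly whether the axis runs through redundant
cells, corrected by the parity of k.\<close>

lemma centre_eq_iff [simp]: "centre c = centre c' \<longleftrightarrow> c = c'"
  by (cases c; cases c') (simp add: centre_def)

lemma glide_map_diagonal_centre:
  "glide_map (centre c) (Complex (1 / sqrt 2) (1 / sqrt 2)) (of_int k * sqrt 2) (centre (x, y))
     = centre (fst c - snd c + y + k, snd c - fst c + x + k)"
  by (cases c) (simp add: glide_map_def centre_def complex_eq_iff power2_eq_square field_simps)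

lemma glide_map_antidiagonal_centre:
  "glide_map (centre c) (Complex (1 / sqrt 2) (- 1 / sqrt 2)) (of_int k * sqrt 2) (centre (x, y))
     = centre (fst c + snd c - y + k, fst c + snd c - x - k)"
  by (cases c) (simp add: glide_map_def centre_def complex_eq_iff power2_eq_square field_simps)

lemma swaps_glide_map_diagonal:
  assumes "u = Complex (1 / sqrt 2) (1 / sqrt 2) \<or> u = Complex (1 / sqrt 2) (- 1 / sqrt 2)"
  shows "swaps (glide_map p u s)"
  using assms by (auto simp: swaps_def glide_map_def power2_eq_square field_simps)

lemma glide_map_diagonal_centre_parity:
  assumes "u = Complex (1 / sqrt 2) (1 / sqrt 2) \<or> u = Complex (1 / sqrt 2) (- 1 / sqrt 2)"
    and "glide_map (centre c) u (of_int k * sqrt 2) (centre d) = centre d'"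
  shows "even (fst d') = (even (snd d) = even (fst c + snd c + k)) \<and>
         even (snd d') = (even (fst d) = even (fst c + snd c + k))"
proof -
  obtain x y where d: "d = (x, y)" by (cases d)
  from assms consider
      "d' = (fst c - snd c + y + k, snd c - fst c + x + k)"
    | "d' = (fst c + snd c - y + k, fst c + snd c - x - k)"
    unfolding d by (auto simp: glide_map_diagonal_centre glide_map_antidiagonal_centre[simplified])
  then show ?thesis
    by cases (auto simp: d)
qed

lemma is_sym_pattern_if_swaps:
  assumes sym: "is_sym D g False" and "swaps g"
    and parity: "\<And>d d'. g (centre d) = centre d' \<Longrightarrow>
       even (fst d') = (even (snd d) = E) \<and> even (snd d') = (even (fst d) = E)"
  shows "is_sym (pattern a b D) g (a = (E = b))"
  unfolding is_sym_def
proof (intro conjI allI impI)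
  show "plane_isometry g" "g ` grid = grid"
    using sym unfolding is_sym_def by auto
next
  fix d d' assume image: "g (centre d) = centre d'"
  then have "D d' = (\<not> D d)"
    using sym \<open>swaps g\<close> unfolding is_sym_def by blast
  with parity[OF image] \<open>swaps g\<close>
  show "pattern a b D d' = (pattern a b D d \<noteq> (swaps g \<noteq> (a = (E = b))))"
    by (cases d; cases d') (auto simp: pattern_def)
qed

lemma redundant_iff: "redundant a b c \<longleftrightarrow> (a = (even (fst c + snd c) = b))"
  unfolding redundant_def by auto

theorem corollary3p2:
  fixes D :: design and a b :: bool and c :: "int \<times> int" and k :: int and u :: complex
  assumes "is_fabric D" and "periodic D" and "order D > 4"
    and "H1 D = generated {f \<in> H1 D. glide_reflection f}"
    and "\<forall>\<sigma> \<rho>. \<exists>f \<in> H1 D. f ` strand_line \<sigma> = strand_line \<rho>"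
    and "perfect a b D"
    and "u = Complex (1 / sqrt 2) (1 / sqrt 2) \<or> u = Complex (1 / sqrt 2) (- 1 / sqrt 2)"
    and "k \<noteq> 0"
    and "is_sym D (glide_map (centre c) u (of_int k * sqrt 2)) False"
  shows "((even k \<and> \<not> redundant a b c) \<or> (odd k \<and> redundant a b c) \<longrightarrow>
            is_sym (pattern a b D) (glide_map (centre c) u (of_int k * sqrt 2)) False) \<and>
         ((even k \<and> redundant a b c) \<or> (odd k \<and> \<not> redundant a b c) \<longrightarrow>
            is_sym (pattern a b D) (glide_map (centre c) u (of_int k * sqrt 2)) True)"
proof -
  let ?E = "even (fst c + snd c + k)"
  have "is_sym (pattern a b D) (glide_map (centre c) u (of_int k * sqrt 2)) (a = (?E = b))"
    using assms(9) swaps_glide_map_diagonal[OF assms(7)]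
      glide_map_diagonal_centre_parity[OF assms(7)]
    by (rule is_sym_pattern_if_swaps)
  then show ?thesis
    by (auto simp: redundant_iff)
qed

end
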